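(* If $B\ge0.287$, then the maximum of $x\mapsto|\Delta(x+iB)|$ over $x\in[-\tfrac12,\tfrac12]$ is attained at $x=\tfrac12$ (and, by symmetry, at $x=-\tfrac12$).
   Context: $q=e^{2\pi iz}$ and $\Delta(z)=q\prod_{n\ge1}(1-q^n)^{24}$ is the modular discriminant. *)

theory Defs
  imports "HOL-Analysis.Analysis"
begin

definition qnome :: "complex \<Rightarrow> complex" where
  "qnome z = exp (2 * of_real pi * \<i> * z)"

definition modular_Delta :: "complex \<Rightarrow> complex" where
  "modular_Delta z = qnome z * (\<Prod>n. (1 - qnome z ^ (Suc n)) ^ 24)"

end

theory Submission
  imports Defs
begin

text \<open>
  Write \<open>r = exp (-2\<pi>B)\<close>, \<open>t = 2\<pi>x\<close> and \<open>q = r e\<^sup>i\<^sup>t\<close>, so that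
  \<open>|\<Delta>(x + iB)| = r \<Prod>\<^sub>n a\<^sub>n(t)\<^sup>1\<^sup>2\<close> with \<open>a\<^sub>n(t) = |1 - q\<^sup>n|\<^sup>2 = 1 - 2r\<^sup>n cos nt + r\<^sup>2\<^sup>n\<close>.
  Since \<open>u \<le> a exp ((u - a)/a)\<close>, a partial product of the \<open>a\<^sub>n(t)\<close> is at most the
  corresponding one of the \<open>a\<^sub>n(\<pi>)\<close> once the relative differences
  \<open>(a\<^sub>n(t) - a\<^sub>n(\<pi>))/a\<^sub>n(\<pi>)\<close> have a nonpositive sum. Their numerators
  \<open>2r\<^sup>n((-1)\<^sup>n - cos nt)\<close> are at most \<open>2r\<^sup>n n\<^sup>2 (1 + cos t)\<close>, so every term carries the
  factor \<open>1 + cos t\<close>: the terms \<open>n \<le> 3\<close> are computed exactly, the rest is a geometric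
  tail in \<open>2r\<close>, and for \<open>r \<le> 1/6\<close>, which is what \<open>B \<ge> 0.287\<close> gives, the negative
  term \<open>n = 1\<close> dominates. At \<open>x = \<plusminus>1/2\<close> one has \<open>t = \<plusminus>\<pi>\<close>.
\<close>

lemma abs_sin_mult_le: "\<bar>sin (real n * x)\<bar> \<le> real n * \<bar>sin x\<bar>"
proof (induction n)
  case 0
  then show ?case by simp
next
  case (Suc n)
  have "sin (real (Suc n) * x) = sin (real n * x) * cos x + cos (real n * x) * sin x"
    by (simp add: distrib_right sin_add)
  also have "\<bar>\<dots>\<bar> \<le> \<bar>sin (real n * x)\<bar> + \<bar>sin x\<bar>"
  proof -
    have "\<bar>sin (real n * x) * cos x\<bar> \<le> \<bar>sin (real n * x)\<bar>"
      by (simp add: abs_mult mult_left_le)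
    moreover have "\<bar>cos (real n * x) * sin x\<bar> \<le> \<bar>sin x\<bar>"
      by (simp add: abs_mult mult_left_le_one_le)
    ultimately show ?thesis
      by (smt (verit) abs_triangle_ineq)
  qed
  finally show ?case
    using Suc by (simp add: distrib_right)
qed

lemma one_minus_cos_mult_le: "1 - cos (real n * x) \<le> (real n)^2 * (1 - cos x)"
proof -
  have "sin (real n * (x/2))^2 \<le> (real n * \<bar>sin (x/2)\<bar>)^2"
    using abs_sin_mult_le[of n "x/2"] by (metis abs_ge_zero power2_abs power_mono)
  moreover have "1 - cos (real n * x) = 2 * sin (real n * (x/2))^2" "1 - cos x = 2 * sin (x/2)^2"
    using cos_double_sin[of "real n * (x/2)"] cos_double_sin[of "x/2"] by simp_all
  ultimately show ?thesis
    by (simp add: power_mult_distrib)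
qed

lemma neg_one_power_minus_cos_mult_le: "(-1)^n - cos (real n * t) \<le> (real n)^2 * (1 + cos t)"
proof -
  define p where "p = t - pi"
  have "(-1)^n - cos (real n * t) = (-1)^n * (1 - cos (real n * p))"
    unfolding p_def by (simp add: right_diff_distrib cos_diff)
  also have "\<dots> \<le> 1 - cos (real n * p)"
    by (cases "even n") auto
  also have "\<dots> \<le> (real n)^2 * (1 - cos p)"
    by (rule one_minus_cos_mult_le)
  also have "1 - cos p = 1 + cos t"
    unfolding p_def by (simp add: cos_diff)
  finally show ?thesis .
qed

lemma power2_le_two_power: "4 \<le> n \<Longrightarrow> n^2 \<le> (2::nat)^n"
proof (induction n rule: nat_induct_at_least)
  case base
  then show ?case by simp
next
  case (Suc n)
  have "2*n + 1 \<le> n*n"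
    using Suc(1) mult_le_mono1[of 4 n n] by linarith
  then have "(Suc n)^2 \<le> n^2 + n^2"
    by (simp add: power2_eq_square)
  also have "\<dots> \<le> 2^n + 2^n"
    using Suc(2) by simp
  finally show ?case by simp
qed

lemma sum_power_le_geometric_tail:
  fixes x :: real
  assumes "0 \<le> x" "x < 1"
  shows "(\<Sum>n=m..N. x^n) \<le> x^m / (1 - x)"
  using assms by (auto simp: sum_gp divide_right_mono)

lemma exp_ge_Taylor_sum:
  fixes x :: real
  assumes "0 \<le> x"
  shows "(\<Sum>n<k. x^n / fact n) \<le> exp x"
proof -
  have exp: "(\<lambda>n. x^n / fact n) sums exp x"
    using exp_converges[of x] by (simp add: divide_inverse_commute)
  then have "(\<Sum>n<k. x^n / fact n) \<le> (\<Sum>n. x^n / fact n)"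
    using assms by (intro sum_le_suminf) (auto simp: sums_iff)
  also have "\<dots> = exp x"
    using exp by (simp add: sums_iff)
  finally show ?thesis .
qed

text \<open>The product version of \<open>log u \<le> log a + (u - a)/a\<close>.\<close>

lemma prod_le_prod_of_sum_rel_diff_nonpos:
  fixes u a :: "'i \<Rightarrow> real"
  assumes a: "\<And>i. i \<in> I \<Longrightarrow> 0 < a i" and u: "\<And>i. i \<in> I \<Longrightarrow> 0 \<le> u i"
    and sum: "(\<Sum>i\<in>I. (u i - a i) / a i) \<le> 0"
  shows "(\<Prod>i\<in>I. u i) \<le> (\<Prod>i\<in>I. a i)"
proof -
  have "(\<Prod>i\<in>I. u i) \<le> (\<Prod>i\<in>I. a i * exp ((u i - a i) / a i))"
  proof (rule prod_mono)
    fix i assume i: "i \<in> I"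
    have "u i = a i * (1 + (u i - a i) / a i)"
      using a[OF i] by (simp add: field_simps)
    also have "\<dots> \<le> a i * exp ((u i - a i) / a i)"
      using a[OF i] by (intro mult_left_mono exp_ge_add_one_self) auto
    finally show "0 \<le> u i \<and> u i \<le> a i * exp ((u i - a i) / a i)"
      using u[OF i] by simp
  qed
  also have "\<dots> = (\<Prod>i\<in>I. a i) * exp (\<Sum>i\<in>I. (u i - a i) / a i)"
    by (cases "finite I") (simp_all add: prod.distrib exp_sum)
  also have "\<dots> \<le> (\<Prod>i\<in>I. a i)"
    using sum a by (simp add: mult_left_le less_imp_le prod_nonneg)
  finally show ?thesis .
qed

lemma cmod_one_minus_cis_power2:
  "(cmod (1 - complex_of_real \<rho> * cis \<phi>))^2 = 1 - 2 * \<rho> * cos \<phi> + \<rho>^2"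
proof -
  have "(cmod (1 - complex_of_real \<rho> * cis \<phi>))^2 = (1 - \<rho> * cos \<phi>)^2 + (\<rho> * sin \<phi>)^2"
    by (simp add: cmod_power2)
  also have "\<dots> = 1 - 2 * \<rho> * cos \<phi> + \<rho>^2 * (sin \<phi>^2 + cos \<phi>^2)"
    by algebra
  finally show ?thesis by simp
qed

definition factor_sq :: "real \<Rightarrow> real \<Rightarrow> nat \<Rightarrow> real" where
  "factor_sq r t n = 1 - 2 * r^n * cos (real n * t) + r^(2*n)"

lemma norm_one_minus_power_sq:
  assumes "0 \<le> r"
  shows "norm (1 - (complex_of_real r * cis t)^n)^2 = factor_sq r t n"
proof -
  have "(complex_of_real r * cis t)^n = complex_of_real (r^n) * cis (real n * t)"
    by (simp add: power_mult_distrib Complex.DeMoivre)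
  then show ?thesis
    unfolding factor_sq_def by (simp only: cmod_one_minus_cis_power2 power_even_eq)
qed

lemma factor_sq_nonneg: "0 \<le> r \<Longrightarrow> 0 \<le> factor_sq r t n"
  using norm_one_minus_power_sq by (metis zero_le_power2)

lemma factor_sq_pi: "factor_sq r pi n = (1 - (-r)^n)^2"
proof -
  have "((-r)^n)^2 = r^(2*n)"
    by (cases "even n") (simp_all add: power_even_eq)
  then have "(1 - (-r)^n)^2 = 1 - 2 * (-r)^n + r^(2*n)"
    by (simp add: power2_diff)
  moreover have "(-r)^n = r^n * cos (real n * pi)"
    by (cases "even n") simp_all
  ultimately show ?thesis
    unfolding factor_sq_def by simp
qed

lemma factor_sq_minus_pi: "factor_sq r (-pi) = factor_sq r pi"
  by (simp add: factor_sq_def fun_eq_iff)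

lemma factor_sq_pi_ge:
  assumes "0 \<le> r" "r < 1" "1 \<le> n"
  shows "(1-r)^2 \<le> factor_sq r pi n"
proof -
  have "(-r)^n \<le> \<bar>-r\<bar>^n"
    by (metis abs_ge_self power_abs)
  also have "\<dots> \<le> r"
    using assms power_decreasing[of 1 n r] by simp
  finally show ?thesis
    unfolding factor_sq_pi using assms by (intro power_mono) auto
qed

lemma factor_sq_diff_pi:
  "factor_sq r t n - factor_sq r pi n = 2 * r^n * ((-1)^n - cos (real n * t))"
  unfolding factor_sq_def by (simp add: algebra_simps)

definition factor_rel_diff :: "real \<Rightarrow> real \<Rightarrow> nat \<Rightarrow> real" where
  "factor_rel_diff r t n = (factor_sq r t n - factor_sq r pi n) / factor_sq r pi n"

lemma factor_rel_diff_eq: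
  "factor_rel_diff r t n = 2 * r^n * ((-1)^n - cos (real n * t)) / (1 - (-r)^n)^2"
  unfolding factor_rel_diff_def factor_sq_diff_pi by (simp only: factor_sq_pi)

lemma factor_rel_diff_le_geometric:
  assumes r0: "0 < r" and r1: "r \<le> 1/6" and n: "4 \<le> n"
  shows "factor_rel_diff r t n \<le> 2 * (1 + cos t) * (2*r)^n / (1-r)^2"
proof -
  have s: "0 \<le> 1 + cos t"
    using cos_ge_minus_one[of t] by linarith
  have "(real n)^2 \<le> 2^n"
    using power2_le_two_power[OF n] by (metis of_nat_le_iff of_nat_numeral of_nat_power)
  then have "(-1)^n - cos (real n * t) \<le> 2^n * (1 + cos t)"
    using neg_one_power_minus_cos_mult_le[of n t] s mult_right_mono by fastforce
  then have diff: "factor_sq r t n - factor_sq r pi n \<le> 2 * (1 + cos t) * (2*r)^n"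
    unfolding factor_sq_diff_pi using r0 mult_left_mono[of _ _ "2 * r^n"]
    by (fastforce simp: power_mult_distrib algebra_simps)
  have denom: "(1-r)^2 \<le> factor_sq r pi n" "0 < (1-r)^2"
    using r0 r1 n by (auto intro: factor_sq_pi_ge)
  show ?thesis
    unfolding factor_rel_diff_def using diff denom s r0
    by (smt (verit) divide_right_mono frac_le mult_nonneg_nonneg zero_le_power)
qed

lemma sum_factor_rel_diff_tail_le:
  assumes r0: "0 < r" and r1: "r \<le> 1/6"
  shows "(\<Sum>n=4..N. factor_rel_diff r t n) \<le> 2 * (1 + cos t) * (16*r^4/((1-r)^2*(1-2*r)))"
proof -
  have s: "0 \<le> 1 + cos t"
    using cos_ge_minus_one[of t] by linarith
  have "(\<Sum>n=4..N. factor_rel_diff r t n) \<le> (\<Sum>n=4..N. 2 * (1 + cos t) * (2*r)^n / (1-r)^2)"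
    using r0 r1 by (intro sum_mono factor_rel_diff_le_geometric) auto
  also have "\<dots> = 2 * (1 + cos t) / (1-r)^2 * (\<Sum>n=4..N. (2*r)^n)"
    by (simp add: sum_distrib_left)
  also have "\<dots> \<le> 2 * (1 + cos t) / (1-r)^2 * ((2*r)^4 / (1 - 2*r))"
    using r0 r1 s by (intro mult_left_mono sum_power_le_geometric_tail) auto
  also have "\<dots> = 2 * (1 + cos t) * (16*r^4/((1-r)^2*(1-2*r)))"
    by (simp add: power_mult_distrib)
  finally show ?thesis .
qed

lemma linear_minus_square_le_at_minus_one:
  fixes d2 d3 c :: real
  assumes "0 \<le> d3" "12 * d3 \<le> d2" "-1 \<le> c" "c \<le> 1"
  shows "d2 * (1 - c) - d3 * (2*c - 1)^2 \<le> 2 * d2 - 9 * d3"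
proof -
  have "2 * d2 - 9 * d3 - (d2 * (1 - c) - d3 * (2*c - 1)^2) = (1 + c) * (d2 - 4 * (2 - c) * d3)"
    by (simp add: power2_eq_square algebra_simps)
  moreover have "4 * (2 - c) * d3 \<le> 12 * d3"
    using assms mult_right_mono[of "4 * (2 - c)" 12 d3] by simp
  then have "0 \<le> (1 + c) * (d2 - 4 * (2 - c) * d3)"
    using assms by (intro mult_nonneg_nonneg) auto
  ultimately show ?thesis
    by linarith
qed

lemma factor_rel_diff_first_three:
  "factor_rel_diff r t 1 + factor_rel_diff r t 2 + factor_rel_diff r t 3
     = 2 * (1 + cos t) * (- r/(1+r)^2
         + (2*r^2/(1-r^2)^2 * (1 - cos t) - r^3/(1+r^3)^2 * (2 * cos t - 1)^2))"
proof -
  define c where "c = cos t"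
  define s where "s = 1 + c"
  note f = factor_rel_diff_eq[of r t]
  have "factor_rel_diff r t 1 = 2 * r * (-1 - c) / (1+r)^2"
    unfolding f c_def by simp
  also have "\<dots> = 2 * s * (- r) / (1+r)^2"
    unfolding s_def by (simp add: algebra_simps)
  finally have f1: "factor_rel_diff r t 1 = 2 * s * (- r/(1+r)^2)"
    by simp
  have "cos (real 2 * t) = 2 * c^2 - 1"
    unfolding c_def using cos_double_cos[of t] by simp
  then have f2: "factor_rel_diff r t 2 = 2 * s * (2*r^2/(1-r^2)^2 * (1 - c))"
    unfolding f s_def by (simp only:) (simp add: power2_eq_square algebra_simps)
  have "cos (real 3 * t) = 4 * c^3 - 3 * c"
    unfolding c_def using cos_treble_cos[of t] by simp
  then have f3: "factor_rel_diff r t 3 = 2 * s * (- (r^3/(1+r^3)^2 * (2 * c - 1)^2))"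
    unfolding f s_def
    by (simp only:) (simp add: power2_eq_square power3_eq_cube minus_divide_left algebra_simps)
  show ?thesis
    unfolding f1 f2 f3 s_def c_def by (simp add: algebra_simps)
qed

lemma factor_rel_diff_first_three_le:
  assumes r0: "0 < r" and r1: "r \<le> 1/6"
  shows "factor_rel_diff r t 1 + factor_rel_diff r t 2 + factor_rel_diff r t 3
           \<le> 2 * (1 + cos t) * (- r/(1+r)^2 + 4*r^2/(1-r^2)^2 - 9*r^3/(1+r^3)^2)"
proof -
  define d2 where "d2 = 2*r^2/(1-r^2)^2"
  define d3 where "d3 = r^3/(1+r^3)^2"
  have "0 < 1 + r^3" "1 \<le> (1+r^3)^2"
    using r0 by (simp_all add: add_pos_pos one_le_power)
  then have d3: "0 \<le> d3" "d3 \<le> r^3"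
    unfolding d3_def using r0 divide_left_mono[of 1 "(1+r^3)^2" "r^3"] by simp_all
  have "r^2 \<le> 1/36"
    using r0 r1 power_mono[of r "1/6" 2] by (simp add: power_divide)
  then have "0 < 1 - r^2" "(1-r^2)^2 \<le> 1"
    by (auto simp: power_le_one)
  then have "2*r^2 \<le> d2"
    unfolding d2_def by (simp add: le_divide_eq mult_left_le)
  moreover have "12 * r^3 \<le> 2 * r^2"
    using r0 r1 by (simp add: power2_eq_square power3_eq_cube)
  ultimately have "12 * d3 \<le> d2"
    using d3 by linarith
  then have "d2 * (1 - cos t) - d3 * (2 * cos t - 1)^2 \<le> 2 * d2 - 9 * d3"
    using d3 by (intro linear_minus_square_le_at_minus_one) auto
  moreover have "0 \<le> 2 * (1 + cos t)"
    using cos_ge_minus_one[of t] by (intro mult_nonneg_nonneg) linarith+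
  ultimately have "2 * (1 + cos t) * (- r/(1+r)^2 + (d2 * (1 - cos t) - d3 * (2 * cos t - 1)^2))
      \<le> 2 * (1 + cos t) * (- r/(1+r)^2 + (2 * d2 - 9 * d3))"
    by (intro mult_left_mono add_left_mono)
  then show ?thesis
    unfolding factor_rel_diff_first_three d2_def d3_def by (simp add: algebra_simps)
qed

lemma le_div_one_plus_square: "0 \<le> r \<Longrightarrow> r - 2*r^2 \<le> r/(1+r)^2" for r :: real
proof -
  assume r: "0 \<le> r"
  have "(r - 2*r^2) * (1+r)^2 = r - r^3 * (3 + 2*r)"
    by (simp add: power2_eq_square power3_eq_cube algebra_simps)
  also have "\<dots> \<le> r"
    using r by simp
  finally show ?thesis
    using r by (simp add: pos_le_divide_eq)
qed

lemma cubic_nonpos: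
  fixes r :: real
  assumes r0: "0 < r" and r1: "r \<le> 1/6"
  shows "-r + (7634/1225) * r^2 - (157/50) * r^3 \<le> 0"
proof -
  define A :: real where "A = 7634/1225"
  define B :: real where "B = 157/50"
  have "-r + A * r^2 - B * r^3 = r * (-1 + A*r - B*r^2)"
    by (simp add: power2_eq_square power3_eq_cube algebra_simps)
  also have "\<dots> \<le> r * (-1 + A/6 - B/36)"
  proof -
    have "(-1 + A/6 - B/36) - (-1 + A*r - B*r^2) = (1/6 - r) * (A - B*(r + 1/6))"
      by (simp add: power2_eq_square algebra_simps)
    moreover have "0 \<le> (1/6 - r) * (A - B*(r + 1/6))"
      using r0 r1 unfolding A_def B_def by (intro mult_nonneg_nonneg) auto
    ultimately show ?thesis
      using r0 by (intro mult_left_mono) auto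
  qed
  also have "\<dots> \<le> 0"
    using r0 unfolding A_def B_def by (simp add: mult_nonneg_nonpos)
  finally show ?thesis
    unfolding A_def B_def .
qed

text \<open>The bracket of \<open>factor_rel_diff_first_three_le\<close> plus that of
  \<open>sum_factor_rel_diff_tail_le\<close>; only the first term is negative.\<close>

lemma factor_rel_diff_bound_nonpos:
  fixes r :: real
  assumes r0: "0 < r" and r1: "r \<le> 1/6"
  shows "- r/(1+r)^2 + 4*r^2/(1-r^2)^2 - 9*r^3/(1+r^3)^2 + 16*r^4/((1-r)^2*(1-2*r)) \<le> 0"
proof -
  have term2: "4*r^2/(1-r^2)^2 \<le> (5184/1225) * r^2"
  proof -
    have "r^2 \<le> (1/6)^2"
      using r0 r1 by (intro power_mono) auto
    then have "35/36 \<le> 1 - r^2"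
      by (simp add: power2_eq_square)
    then have "4*r^2/(1-r^2)^2 \<le> 4*r^2/(35/36)^2"
      by (intro divide_left_mono power_mono mult_pos_pos) auto
    then show ?thesis
      by (simp add: power2_eq_square)
  qed
  have term3: "(89/10) * r^3 \<le> 9*r^3/(1+r^3)^2"
  proof -
    have "r^3 \<le> (1/6)^3"
      using r0 r1 by (intro power_mono) auto
    then have "(1+r^3)^2 \<le> (217/216)^2"
      using r0 by (intro power_mono) (auto simp: power3_eq_cube)
    moreover have "0 < 1 + r^3"
      using r0 by (simp add: add_pos_pos)
    ultimately have "89/10 \<le> 9/(1+r^3)^2"
      using divide_left_mono[of "(1+r^3)^2" "(217/216)^2" 9] by (simp add: power2_eq_square)
    then show ?thesis
      using r0 mult_right_mono[of "89/10" "9/(1+r^3)^2" "r^3"] by simp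
  qed
  have tail: "16*r^4/((1-r)^2*(1-2*r)) \<le> (144/25) * r^3"
  proof -
    have "(5/6)^2 \<le> (1-r)^2"
      using r1 by (intro power_mono) auto
    then have "25/36 * (2/3) \<le> (1-r)^2*(1-2*r)"
      using r1 by (intro mult_mono) (auto simp: power_divide)
    then have "16*r^4/((1-r)^2*(1-2*r)) \<le> 16*r^4/(25/36 * (2/3))"
      by (intro divide_left_mono) auto
    also have "\<dots> = (864/25) * r * r^3"
      by (simp add: power_numeral_reduce)
    also have "\<dots> \<le> (144/25) * r^3"
      using r0 r1 by (simp add: mult_right_mono)
    finally show ?thesis .
  qed
  show ?thesis
    using le_div_one_plus_square[of r] term2 term3 tail cubic_nonpos[OF r0 r1] r0
      minus_divide_left[of r "(1+r)^2"]
    by linarith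
qed

lemma sum_factor_rel_diff_nonpos:
  assumes r0: "0 < r" and r1: "r \<le> 1/6" and N: "3 \<le> N"
  shows "(\<Sum>n=1..N. factor_rel_diff r t n) \<le> 0"
proof -
  have "{1..N} = {1,2,3} \<union> {4..N}"
    using N by auto
  then have "(\<Sum>n=1..N. factor_rel_diff r t n)
      = factor_rel_diff r t 1 + factor_rel_diff r t 2 + factor_rel_diff r t 3
        + (\<Sum>n=4..N. factor_rel_diff r t n)"
    by (simp add: sum.union_disjoint)
  also have "\<dots> \<le> 2 * (1 + cos t) * (- r/(1+r)^2 + 4*r^2/(1-r^2)^2 - 9*r^3/(1+r^3)^2)
                 + 2 * (1 + cos t) * (16*r^4/((1-r)^2*(1-2*r)))"
    using factor_rel_diff_first_three_le[OF r0 r1] sum_factor_rel_diff_tail_le[OF r0 r1]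
    by (rule add_mono)
  also have "\<dots> = 2 * (1 + cos t)
      * (- r/(1+r)^2 + 4*r^2/(1-r^2)^2 - 9*r^3/(1+r^3)^2 + 16*r^4/((1-r)^2*(1-2*r)))"
    by (simp add: distrib_left)
  also have "\<dots> \<le> 0"
  proof (rule mult_nonneg_nonpos)
    show "0 \<le> 2 * (1 + cos t)"
      using cos_ge_minus_one[of t] by (intro mult_nonneg_nonneg) linarith+
  qed (rule factor_rel_diff_bound_nonpos[OF r0 r1])
  finally show ?thesis .
qed

lemma prod_factor_sq_le_at_pi:
  assumes "0 < r" "r \<le> 1/6" "3 \<le> N"
  shows "(\<Prod>n=1..N. factor_sq r t n) \<le> (\<Prod>n=1..N. factor_sq r pi n)"
proof (rule prod_le_prod_of_sum_rel_diff_nonpos)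
  show "0 < factor_sq r pi n" if "n \<in> {1..N}" for n
  proof -
    have "(1-r)^2 \<le> factor_sq r pi n"
      using assms that by (intro factor_sq_pi_ge) auto
    moreover have "0 < (1-r)^2"
      using assms by simp
    ultimately show ?thesis
      by linarith
  qed
  show "0 \<le> factor_sq r t n" for n
    using assms by (intro factor_sq_nonneg) simp
  show "(\<Sum>n=1..N. (factor_sq r t n - factor_sq r pi n) / factor_sq r pi n) \<le> 0"
    using sum_factor_rel_diff_nonpos[OF assms] unfolding factor_rel_diff_def .
qed

lemma qnome_Complex: "qnome (Complex x y) = complex_of_real (exp (-2*pi*y)) * cis (2*pi*x)"
proof -
  have "2 * of_real pi * \<i> * Complex x y = Complex (-2*pi*y) (2*pi*x)"
    by (simp add: complex_eq_iff)
  then show ?thesis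
    unfolding qnome_def by (simp add: exp_eq_polar)
qed

lemma norm_prod_Delta_factors:
  assumes "0 \<le> r"
  shows "norm (\<Prod>i\<le>n. (1 - (complex_of_real r * cis t)^Suc i)^24)
           = (\<Prod>m=1..Suc n. factor_sq r t m)^12"
proof -
  have pow: "a^24 = (a^2)^12" for a :: real
    by (simp flip: power_mult)
  have "norm (\<Prod>i\<le>n. (1 - (complex_of_real r * cis t)^Suc i)^24)
      = (\<Prod>i\<le>n. norm (1 - (complex_of_real r * cis t)^Suc i)^24)"
    by (simp only: prod_norm[symmetric] norm_power)
  also have "\<dots> = (\<Prod>i\<le>n. factor_sq r t (Suc i))^12"
    by (simp only: pow norm_one_minus_power_sq[OF assms] prod_power_distrib)
  also have "(\<Prod>i\<le>n. factor_sq r t (Suc i)) = (\<Prod>m=1..Suc n. factor_sq r t m)"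
    unfolding atMost_atLeast0 using prod.shift_bounds_cl_Suc_ivl[of "factor_sq r t" 0 n] by simp
  finally show ?thesis .
qed

lemma convergent_prod_Delta_factors:
  fixes q :: complex
  assumes "norm q < 1"
  shows "convergent_prod (\<lambda>n. (1 - q^Suc n)^24)"
proof -
  have "summable (\<lambda>i. norm q * norm q^i)"
    using assms by (intro summable_mult summable_geometric) auto
  then have "summable (\<lambda>i. norm ((1 - q^Suc i) - 1))"
    by (simp add: norm_power norm_mult)
  then show ?thesis
    by (intro convergent_prod_power abs_convergent_prod_imp_convergent_prod
        summable_imp_abs_convergent_prod)
qed

lemma norm_modular_Delta_LIMSEQ:
  assumes "0 < y"
  defines "r \<equiv> exp (-2*pi*y)"
  shows "(\<lambda>n. r * (\<Prod>m=1..Suc n. factor_sq r (2*pi*x) m)^12)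
           \<longlonglongrightarrow> norm (modular_Delta (Complex x y))"
proof -
  define q where "q = qnome (Complex x y)"
  have q: "q = complex_of_real r * cis (2*pi*x)"
    unfolding q_def qnome_Complex r_def ..
  have r0: "0 < r"
    unfolding r_def by simp
  have norm_q: "norm q = r"
    unfolding q using r0 by (simp add: norm_mult)
  then have "norm q < 1"
    using assms unfolding r_def by simp
  then have "(\<lambda>n. \<Prod>i\<le>n. (1 - q^Suc i)^24) \<longlonglongrightarrow> (\<Prod>n. (1 - q^Suc n)^24)"
    by (intro convergent_prod_LIMSEQ convergent_prod_Delta_factors)
  then have "(\<lambda>n. norm q * norm (\<Prod>i\<le>n. (1 - q^Suc i)^24))
      \<longlonglongrightarrow> norm q * norm (\<Prod>n. (1 - q^Suc n)^24)"
    by (intro tendsto_mult_left tendsto_norm)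
  moreover have "norm (\<Prod>i\<le>n. (1 - q^Suc i)^24) = (\<Prod>m=1..Suc n. factor_sq r (2*pi*x) m)^12" for n
    unfolding q using norm_prod_Delta_factors r0 by simp
  ultimately show ?thesis
    unfolding modular_Delta_def q_def[symmetric] by (simp add: norm_mult norm_q)
qed

lemma exp_neg_two_pi_le_one_sixth:
  assumes "0.287 \<le> y"
  shows "exp (-2*pi*y) \<le> 1/6"
proof -
  have "(3.14::real) \<le> 3.141592653588"
    by simp
  then have "3.14 \<le> pi"
    using pi_approx(1) by linarith
  then have "1.8 \<le> 2*pi*y"
    using assms mult_mono[of "2*3.14" "2*pi" "0.287" y] by simp
  moreover have "6 \<le> exp (1.8::real)"
    using exp_ge_Taylor_sum[of "1.8::real" 8]
    by (simp add: lessThan_nat_numeral fact_numeral power_divide)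
  ultimately have "6 \<le> exp (2*pi*y)"
    by (meson exp_le_cancel_iff order_trans)
  then show ?thesis
    by (simp add: exp_minus field_simps)
qed

lemma norm_modular_Delta_le_at_pi:
  assumes small: "exp (-2*pi*y) \<le> 1/6"
    and half: "factor_sq (exp (-2*pi*y)) (2*pi*x') = factor_sq (exp (-2*pi*y)) pi"
  shows "norm (modular_Delta (Complex x y)) \<le> norm (modular_Delta (Complex x' y))"
proof -
  define r where "r = exp (-2*pi*y)"
  have r0: "0 < r"
    unfolding r_def by simp
  have "0 < y"
  proof (rule ccontr)
    assume "\<not> 0 < y"
    then have "0 \<le> -2*pi*y"
      by (auto intro: mult_nonneg_nonpos)
    then have "1 \<le> exp (-2*pi*y)"
      by simp
    then show False
      using small by linarith
  qed
  have half_r: "factor_sq r (2*pi*x') = factor_sq r pi"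
    using half unfolding r_def .
  have "\<forall>n\<ge>2. r * (\<Prod>m=1..Suc n. factor_sq r (2*pi*x) m)^12
      \<le> r * (\<Prod>m=1..Suc n. factor_sq r (2*pi*x') m)^12"
  proof (intro allI impI)
    fix n :: nat
    assume "2 \<le> n"
    then have "(\<Prod>m=1..Suc n. factor_sq r (2*pi*x) m) \<le> (\<Prod>m=1..Suc n. factor_sq r pi m)"
      using small r0 unfolding r_def[symmetric] by (intro prod_factor_sq_le_at_pi) auto
    then show "r * (\<Prod>m=1..Suc n. factor_sq r (2*pi*x) m)^12
        \<le> r * (\<Prod>m=1..Suc n. factor_sq r (2*pi*x') m)^12"
      unfolding half_r using r0
      by (intro mult_left_mono power_mono prod_nonneg factor_sq_nonneg) auto
  qed
  then show ?thesis
    using LIMSEQ_le[OF norm_modular_Delta_LIMSEQ[OF \<open>0 < y\<close>] norm_modular_Delta_LIMSEQ[OF \<open>0 < y\<close>]]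
    unfolding r_def by blast
qed

theorem mainTheorem6:
  fixes B :: real
  assumes "B \<ge> 0.287"
  shows "(\<forall>x\<in>{-1/2..1/2::real}. norm (modular_Delta (Complex x B)) \<le> norm (modular_Delta (Complex (1/2) B)))
       \<and> (\<forall>x\<in>{-1/2..1/2::real}. norm (modular_Delta (Complex x B)) \<le> norm (modular_Delta (Complex (-1/2) B)))"
proof -
  have small: "exp (-2*pi*B) \<le> 1/6"
    using assms by (rule exp_neg_two_pi_le_one_sixth)
  have "factor_sq (exp (-2*pi*B)) (2*pi*(1/2)) = factor_sq (exp (-2*pi*B)) pi"
    "factor_sq (exp (-2*pi*B)) (2*pi*(-1/2)) = factor_sq (exp (-2*pi*B)) pi"
    by (simp_all add: factor_sq_minus_pi)
  then show ?thesis
    using norm_modular_Delta_le_at_pi[OF small] by blast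
qed

end
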